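(* Let $G_1$ be a graph on $n$ nodes with Laplacian $Q_1$, and for $p\ge 0$ let $$Q(p)=\begin{bmatrix} Q_1+p(n-1)I & -p(J-I)\\ -p(J-I) & Q_1+p(n-1)I\end{bmatrix},$$ where $J$ is the $n\times n$ all-one matrix (two copies of $G_1$ coupled by an $(n-1)$-to-$(n-1)$ interconnection $B=p(J-I)$), with eigenvalues $0=\mu_N(p)\le\mu_{N-1}(p)\le\dots\le\mu_1(p)$, $N=2n$. Define $p^*=\sup\big(\{0\}\cup\{p>0:\ \mu_{N-1}(p)=2(n-1)p\}\big)$. Then $$p^*=\frac{\mu_{n-1}(Q_1)}{n},$$ where $\mu_{n-1}(Q_1)$ is the second smallest eigenvalue of $Q_1$.
   Context: $2(n-1)p$ is an eigenvalue of $Q(p)$ with eigenvector $[u^T,-u^T]^T$, $u$ the all-one vector; $p^*$ is the structural transition threshold, described in the paper as the coupling beyond which the algebraic connectivity $\mu_{N-1}$ no longer equals $2(n-1)p$ (formalized here as the supremum). *)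

theory Defs
  imports "Jordan_Normal_Form.Char_Poly" "HOL-Library.Multiset"
begin

text \<open>For the real
  symmetric matrices considered here all eigenvalues are real.\<close>
definition asc_eigs :: "real mat \<Rightarrow> real list" where
  "asc_eigs A = sorted_list_of_multiset (proots (char_poly A))"

definition second_smallest_eig :: "real mat \<Rightarrow> real" where
  "second_smallest_eig A = asc_eigs A ! 1"

definition simple_graph :: "nat \<Rightarrow> (nat \<Rightarrow> nat \<Rightarrow> bool) \<Rightarrow> bool" where
  "simple_graph n E \<longleftrightarrow> (\<forall>i<n. \<not> E i i) \<and> (\<forall>i<n. \<forall>j<n. E i j \<longleftrightarrow> E j i)"

definition laplacian :: "nat \<Rightarrow> (nat \<Rightarrow> nat \<Rightarrow> bool) \<Rightarrow> real mat" where
  "laplacian n E = mat n n (\<lambda>(i,j).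
     if i = j then real (card {k. k < n \<and> E i k}) else if E i j then -1 else 0)"

definition all_ones :: "nat \<Rightarrow> real mat" where
  "all_ones n = mat n n (\<lambda>_. 1)"

definition coupled_Q :: "nat \<Rightarrow> (nat \<Rightarrow> nat \<Rightarrow> bool) \<Rightarrow> real \<Rightarrow> real mat" where
  "coupled_Q n E p =
     (let Q1 = laplacian n E;
          Dg = Q1 + (p * (real n - 1)) \<cdot>\<^sub>m 1\<^sub>m n;
          Bc = - (p \<cdot>\<^sub>m (all_ones n - 1\<^sub>m n))
      in four_block_mat Dg Bc Bc Dg)"

definition p_star :: "nat \<Rightarrow> (nat \<Rightarrow> nat \<Rightarrow> bool) \<Rightarrow> real" where
  "p_star n E = Sup ({0} \<union> {p. p > 0 \<and>
      second_smallest_eig (coupled_Q n E p) = 2 * (real n - 1) * p})"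

end

theory Submission
  imports Defs "Jordan_Normal_Form.Spectral_Radius"
begin

(* Write L for the Laplacian of G_1, J for the all-ones matrix and D, B for the diagonal and
   off-diagonal blocks of Q(p). Conjugating by [[I, 0], [I, I]] gives
   char Q(p) = char (D + B) * char (D - B), with D + B = L + pn I - pJ and
   D - B = L + p(n-2) I + pJ. Since L has zero row sums, the all-ones vector is a common
   eigenvector of L and J; deflating it turns L + aI + cJ into K + aI for one fixed
   (n-1) x (n-1) matrix K. Hence spec L = {0} + spec K and spec Q(p) consists of 0, 2(n-1)p,
   spec K + pn and spec K + p(n-2). The eigenvalues of K are real (L is symmetric) and
   nonnegative (L is positive semidefinite), so with lambda = min spec K = mu_{n-1}(Q_1) one gets
   mu_{N-1}(Q(p)) = min (2(n-1)p, lambda + (n-2)p), which equals 2(n-1)p exactly when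
   pn <= lambda. *)

lemma char_poly_four_block_mat_lower_left_zero:
  fixes A :: "'a :: idom mat"
  assumes A: "A \<in> carrier_mat n n" and B: "B \<in> carrier_mat n m" and D: "D \<in> carrier_mat m m"
  shows "char_poly (four_block_mat A B (0\<^sub>m m n) D) = char_poly A * char_poly D"
proof -
  let ?cm = "\<lambda>A. [:0, 1:] \<cdot>\<^sub>m 1\<^sub>m (dim_row A) + map_mat (\<lambda>a. [:- a:]) A"
  have "?cm (four_block_mat A B (0\<^sub>m m n) D)
      = four_block_mat (?cm A) (map_mat (\<lambda>a. [:- a:]) B) (0\<^sub>m m n) (?cm D)"
    using A B D by (intro eq_matI) (auto simp: one_poly_def)
  moreover have "det \<dots> = det (?cm A) * det (?cm D)"
    using A B D by (intro det_four_block_mat_lower_left_zero[OF _ _ refl]) auto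
  ultimately show ?thesis
    using A D by (simp add: char_poly_defs)
qed

lemma char_poly_four_block_mat_symmetric:
  fixes D B :: "'a :: idom mat"
  assumes D: "D \<in> carrier_mat n n" and B: "B \<in> carrier_mat n n"
  shows "char_poly (four_block_mat D B B D) = char_poly (D + B) * char_poly (D - B)"
proof -
  define T :: "'a mat" where "T = four_block_mat (1\<^sub>m n) (0\<^sub>m n n) (1\<^sub>m n) (1\<^sub>m n)"
  define T' :: "'a mat" where "T' = four_block_mat (1\<^sub>m n) (0\<^sub>m n n) (- 1\<^sub>m n) (1\<^sub>m n)"
  define M where "M = four_block_mat (D + B) B (0\<^sub>m n n) (D - B)"
  have carr: "T \<in> carrier_mat (n + n) (n + n)" "T' \<in> carrier_mat (n + n) (n + n)"
    "M \<in> carrier_mat (n + n) (n + n)"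
    using D B by (auto simp: T_def T'_def M_def)
  have "T * T' = four_block_mat (1\<^sub>m n) (0\<^sub>m n n) (0\<^sub>m n n) (1\<^sub>m n)"
    unfolding T_def T'_def
    by (subst mult_four_block_mat[of _ n n _ n _ n], auto intro!: cong_four_block_mat eq_matI)
  moreover have "T' * T = four_block_mat (1\<^sub>m n) (0\<^sub>m n n) (0\<^sub>m n n) (1\<^sub>m n)"
    unfolding T_def T'_def
    by (subst mult_four_block_mat[of _ n n _ n _ n], auto intro!: cong_four_block_mat eq_matI)
  ultimately have "T * T' = 1\<^sub>m (n + n)" "T' * T = 1\<^sub>m (n + n)"
    by simp_all
  moreover have "T * M = four_block_mat (D + B) B (D + B) D"
    unfolding T_def M_def using D B
    by (subst mult_four_block_mat[of _ n n _ n _ n], auto intro!: cong_four_block_mat eq_matI)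
  moreover have "four_block_mat (D + B) B (D + B) D * T' = four_block_mat D B B D"
    unfolding T'_def using D B
    by (subst mult_four_block_mat[of _ n n _ n _ n], auto intro!: cong_four_block_mat eq_matI)
  ultimately have "similar_mat (four_block_mat D B B D) M"
    using carr D B by (intro similar_matI[where P = T and Q = T' and n = "n + n"]) auto
  then have "char_poly (four_block_mat D B B D) = char_poly M"
    by (rule char_poly_similar)
  also have "\<dots> = char_poly (D + B) * char_poly (D - B)"
    unfolding M_def using D B by (intro char_poly_four_block_mat_lower_left_zero) auto
  finally show ?thesis .
qed

(* If all row sums of A equal r, then in the basis formed by the all-ones vector and the unit
   vectors e_1, ..., e_(n-1), A is block upper triangular with diagonal blocks r and deflate_mat A. *)

definition deflate_mat :: "'a :: ab_group_add mat \<Rightarrow> 'a mat" where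
  "deflate_mat A = mat (dim_row A - 1) (dim_col A - 1)
     (\<lambda>(i, j). A $$ (Suc i, Suc j) - A $$ (0, Suc j))"

lemma deflate_mat_carrier:
  "A \<in> carrier_mat n n \<Longrightarrow> deflate_mat A \<in> carrier_mat (n - 1) (n - 1)"
  by (simp add: deflate_mat_def)

lemma char_poly_const_row_sums:
  fixes A :: "'a :: comm_ring_1 mat"
  assumes A: "A \<in> carrier_mat n n" and "0 < n"
    and rows: "\<And>i. i < n \<Longrightarrow> (\<Sum>j<n. A $$ (i, j)) = r"
  shows "char_poly A = [:-r, 1:] * char_poly (deflate_mat A)"
proof -
  define m where "m = n - 1"
  have n: "n = Suc m"
    using \<open>0 < n\<close> by (simp add: m_def)
  define S :: "'a mat" where "S = mat n n (\<lambda>(i, j). of_bool (j = 0 \<or> j = i))"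
  define S' :: "'a mat" where "S' = mat n n (\<lambda>(i, j). of_bool (j = i) - of_bool (j = 0 \<and> i \<noteq> 0))"
  define M where "M = four_block_mat (mat 1 1 (\<lambda>_. r)) (mat 1 m (\<lambda>(_, j). A $$ (0, Suc j)))
     (0\<^sub>m m 1) (deflate_mat A)"
  have K: "deflate_mat A \<in> carrier_mat m m"
    using deflate_mat_carrier[OF A] by (simp add: m_def)
  have carr: "S \<in> carrier_mat n n" "S' \<in> carrier_mat n n" "M \<in> carrier_mat n n"
    using K by (auto simp: S_def S'_def M_def n)
  have S_mult: "(S * B) $$ (i, j) = B $$ (0, j) + (if i = 0 then 0 else B $$ (i, j))"
    if "B \<in> carrier_mat n n" "i < n" "j < n" for B i j
  proof -
    have "{..<n} \<inter> {k. k = 0 \<or> k = i} = {0, i}" using that by auto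
    then show ?thesis using that by (auto simp: scalar_prod_def atLeast0LessThan S_def)
  qed
  have S'_mult: "(S' * B) $$ (i, j) = B $$ (i, j) - (if i = 0 then 0 else B $$ (0, j))"
    if "B \<in> carrier_mat n n" "i < n" "j < n" for B i j
  proof -
    have "{..<n} \<inter> {k. k = i} = {i}" "{..<n} \<inter> {k. k = 0 \<and> i \<noteq> 0} = (if i = 0 then {} else {0})"
      using that by auto
    then show ?thesis
      using that by (auto simp: scalar_prod_def atLeast0LessThan S'_def left_diff_distrib sum_subtractf)
  qed
  have SS': "S * S' = 1\<^sub>m n"
    using carr by (intro eq_matI) (auto simp: S_mult S'_def simp del: index_mult_mat(1))
  have S'S: "S' * S = 1\<^sub>m n"
    using carr by (intro eq_matI) (auto simp: S'_mult S_def simp del: index_mult_mat(1))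
  have mult_S: "(A * S) $$ (i, j) = (if j = 0 then r else A $$ (i, j))" if "i < n" "j < n" for i j
    using that A rows by (cases "j = 0") (auto simp: S_def scalar_prod_def atLeast0LessThan)
  have "A * S = S * M"
    using carr A K
    by (intro eq_matI) (auto simp: mult_S S_mult M_def deflate_mat_def n simp del: index_mult_mat(1))
  then have "A = S * M * S'"
    using carr A SS' by (metis assoc_mult_mat right_mult_one_mat)
  then have "similar_mat A M"
    using carr A by (intro similar_matI[OF _ SS' S'S]) auto
  then have "char_poly A = char_poly M"
    by (rule char_poly_similar)
  also have "\<dots> = char_poly (mat 1 1 (\<lambda>_. r)) * char_poly (deflate_mat A)"
    unfolding M_def using K by (intro char_poly_four_block_zeros_col) auto
  also have "char_poly (mat 1 1 (\<lambda>_. r)) = [:-r, 1:]"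
    by (subst char_poly_upper_triangular[of _ 1]) (auto simp: upper_triangular_def diag_mat_def)
  finally show ?thesis .
qed

lemma char_poly_zero_row_sums_shift:
  fixes A :: "real mat"
  assumes A: "A \<in> carrier_mat n n" and "0 < n"
    and rows: "\<And>i. i < n \<Longrightarrow> (\<Sum>j<n. A $$ (i, j)) = 0"
  shows "char_poly (A + a \<cdot>\<^sub>m 1\<^sub>m n + c \<cdot>\<^sub>m all_ones n)
    = [:-(a + c * real n), 1:] * char_poly (deflate_mat A + a \<cdot>\<^sub>m 1\<^sub>m (n - 1))"
proof -
  let ?X = "A + a \<cdot>\<^sub>m 1\<^sub>m n + c \<cdot>\<^sub>m all_ones n"
  have X: "?X \<in> carrier_mat n n"
    using A by (simp add: all_ones_def)
  have rows_X: "(\<Sum>j<n. ?X $$ (i, j)) = a + c * real n" if "i < n" for i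
    using A rows[OF that] that by (simp add: all_ones_def sum.distrib flip: of_bool_def)
  have "char_poly ?X = [:-(a + c * real n), 1:] * char_poly (deflate_mat ?X)"
    using rows_X by (rule char_poly_const_row_sums[OF X \<open>0 < n\<close>])
  also have "deflate_mat ?X = deflate_mat A + a \<cdot>\<^sub>m 1\<^sub>m (n - 1)"
    using A by (intro eq_matI) (auto simp: deflate_mat_def all_ones_def)
  finally show ?thesis .
qed

lemma eigenvalue_add_smult_one:
  fixes A :: "'a :: field mat"
  assumes "A \<in> carrier_mat n n"
  shows "eigenvalue (A + a \<cdot>\<^sub>m 1\<^sub>m n) x \<longleftrightarrow> eigenvalue A (x - a)"
proof -
  have "A + a \<cdot>\<^sub>m 1\<^sub>m n \<in> carrier_mat n n"
    using assms by simp
  moreover have "char_matrix (A + a \<cdot>\<^sub>m 1\<^sub>m n) x = char_matrix A (x - a)"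
    using assms by (intro eq_matI) (auto simp: char_matrix_def)
  ultimately show ?thesis
    using eigenvalue_det assms by metis
qed

lemma spectrum_add_smult_one:
  fixes A :: "'a :: field mat"
  assumes "A \<in> carrier_mat n n"
  shows "spectrum (A + a \<cdot>\<^sub>m 1\<^sub>m n) = (+) a ` spectrum A"
  by (auto simp: spectrum_def image_iff eigenvalue_add_smult_one[OF assms])
    (metis add.commute diff_add_cancel)

lemma root_char_poly_add_smult_one:
  fixes A :: "'a :: field mat"
  assumes A: "A \<in> carrier_mat n n"
  shows "poly (char_poly (A + a \<cdot>\<^sub>m 1\<^sub>m n)) x = 0 \<longleftrightarrow> x \<in> (+) a ` spectrum A"
proof -
  have "A + a \<cdot>\<^sub>m 1\<^sub>m n \<in> carrier_mat n n"
    using A by simp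
  from spectrum_root_char_poly[OF this] show ?thesis
    unfolding spectrum_add_smult_one[OF A, symmetric] by simp
qed

lemma Im_eigenvalue_real_symmetric:
  fixes A :: "real mat"
  assumes A: "A \<in> carrier_mat n n" and sym: "transpose_mat A = A"
    and z: "eigenvalue (map_mat complex_of_real A) z"
  shows "Im z = 0"
proof -
  define B where "B = map_mat complex_of_real A"
  have B: "B \<in> carrier_mat n n" and symB: "transpose_mat B = B"
    using A sym by (auto simp: B_def intro!: eq_matI, metis index_transpose_mat(1) carrier_matD)
  obtain v where v: "v \<in> carrier_vec n" "v \<noteq> 0\<^sub>v n" "B *\<^sub>v v = z \<cdot>\<^sub>v v"
    using z B unfolding B_def[symmetric] eigenvalue_def eigenvector_def by auto
  define w where "w = conjugate v"
  have w: "w \<in> carrier_vec n" using v by (simp add: w_def)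
  have Bw: "B *\<^sub>v w = conjugate (B *\<^sub>v v)"
    using A v(1) by (intro eq_vecI) (auto simp: B_def w_def scalar_prod_def)
  have "z * (w \<bullet> v) = w \<bullet> (B *\<^sub>v v)"
    using v w by simp
  also have "\<dots> = (B *\<^sub>v w) \<bullet> v"
    using transpose_vec_mult_scalar[OF B v(1) w] symB by simp
  also have "\<dots> = cnj z * (w \<bullet> v)"
    unfolding Bw v(3) using v w by (simp add: conjugate_smult_vec w_def)
  finally have "z * (w \<bullet> v) = cnj z * (w \<bullet> v)" .
  moreover have "w \<bullet> v \<noteq> 0"
    using v conjugate_square_eq_0_vec[OF v(1)] conjugate_vec_sprod_comm[OF v(1) v(1)]
    by (simp add: w_def)
  ultimately have "z = cnj z" by simp
  then show ?thesis by (simp add: complex_eq_iff)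
qed

lemma real_symmetric_char_poly_factor_has_root:
  fixes A :: "real mat"
  assumes A: "A \<in> carrier_mat n n" and sym: "transpose_mat A = A"
    and cp: "char_poly A = q * g" and deg: "degree g > 0"
  shows "\<exists>x. poly g x = 0"
proof -
  interpret map_poly_hom: map_poly_comm_ring_hom complex_of_real ..
  obtain z where z: "poly (map_poly complex_of_real g) z = 0"
    using fundamental_theorem_of_algebra[of "map_poly complex_of_real g"] deg
    by (auto simp: constant_degree)
  have "poly (char_poly (map_mat complex_of_real A)) z = 0"
    using z by (simp add: of_real_hom.char_poly_hom[OF A] cp map_poly_hom.hom_mult)
  then have "eigenvalue (map_mat complex_of_real A) z"
    using A by (simp add: eigenvalue_root_char_poly[of _ n])
  then have "z = complex_of_real (Re z)"
    using Im_eigenvalue_real_symmetric[OF A sym] by (simp add: complex_eq_iff)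
  then have "poly g (Re z) = 0"
    using z by (metis of_real_eq_0_iff of_real_hom.poly_map_poly)
  then show ?thesis ..
qed

lemma Min_Un_translates:
  fixes S :: "'a :: linordered_ab_group_add set"
  assumes "finite S" and "S \<noteq> {}" and "b \<le> a"
  shows "Min ((+) a ` S \<union> {c} \<union> (+) b ` S) = min c (b + Min S)"
proof (rule Min_eqI)
  show "min c (b + Min S) \<le> x" if "x \<in> (+) a ` S \<union> {c} \<union> (+) b ` S" for x
  proof -
    have "b + Min S \<le> d + s" if "s \<in> S" and "b \<le> d" for d s
      using that assms by (intro add_mono) auto
    then show ?thesis
      using that assms(3) by (auto simp: min_le_iff_disj)
  qed
  show "min c (b + Min S) \<in> (+) a ` S \<union> {c} \<union> (+) b ` S"
    using Min_in[OF assms(1,2)] by (auto simp: min_def)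
qed (use assms in simp)

lemma second_smallest_eig_eq_Min:
  assumes cp: "char_poly A = [:-a, 1:] * g" and "g \<noteq> 0" and root: "\<exists>x. poly g x = 0"
    and above: "\<And>x. poly g x = 0 \<Longrightarrow> a \<le> x"
  shows "second_smallest_eig A = Min {x. poly g x = 0}"
proof -
  define xs where "xs = sorted_list_of_multiset (proots g)"
  have set_xs: "set xs = {x. poly g x = 0}"
    using \<open>g \<noteq> 0\<close> by (simp add: xs_def)
  have "proots (char_poly A) = add_mset a (proots g)"
    using \<open>g \<noteq> 0\<close> by (simp add: cp proots_mult del: mult_pCons_left)
  then have "asc_eigs A = a # xs"
    using set_xs above by (simp add: asc_eigs_def xs_def insort_is_Cons)
  moreover obtain y ys where xs: "xs = y # ys"
    using root set_xs by (cases xs) auto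
  moreover have "Min (set xs) = y"
    using xs sorted_sorted_list_of_multiset[of "proots g"] by (intro Min_eqI) (auto simp: xs_def)
  ultimately show ?thesis
    using set_xs by (simp add: second_smallest_eig_def)
qed

lemma laplacian_carrier: "laplacian n E \<in> carrier_mat n n"
  by (simp add: laplacian_def)

lemma dim_laplacian [simp]: "dim_row (laplacian n E) = n" "dim_col (laplacian n E) = n"
  by (simp_all add: laplacian_def)

lemma transpose_laplacian:
  assumes "simple_graph n E"
  shows "transpose_mat (laplacian n E) = laplacian n E"
  using assms by (intro eq_matI) (auto simp: laplacian_def simple_graph_def)

lemma laplacian_mult_vec:
  assumes G: "simple_graph n E" and v: "v \<in> carrier_vec n" and i: "i < n"
  shows "(laplacian n E *\<^sub>v v) $ i = (\<Sum>j | j < n \<and> E i j. v $ i - v $ j)"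
proof -
  let ?N = "{j. j < n \<and> E i j}"
  have "{..<n} \<inter> {j. j = i} = {i}" "{..<n} \<inter> {j. E i j} = ?N"
    using i by auto
  moreover have "(laplacian n E *\<^sub>v v) $ i
      = (\<Sum>j<n. of_bool (j = i) * (real (card ?N) * v $ i) - of_bool (E i j) * v $ j)"
    using G v i by (auto simp: laplacian_def simple_graph_def scalar_prod_def atLeast0LessThan
        intro!: sum.cong)
  ultimately have "(laplacian n E *\<^sub>v v) $ i = real (card ?N) * v $ i - (\<Sum>j\<in>?N. v $ j)"
    by (simp add: sum_subtractf)
  also have "\<dots> = (\<Sum>j\<in>?N. v $ i - v $ j)"
    by (simp add: sum_subtractf)
  finally show ?thesis .
qed

lemma laplacian_row_sum:
  assumes "simple_graph n E" and "i < n"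
  shows "(\<Sum>j<n. laplacian n E $$ (i, j)) = 0"
proof -
  have "(\<Sum>j<n. laplacian n E $$ (i, j)) = (laplacian n E *\<^sub>v vec n (\<lambda>_. 1)) $ i"
    using assms by (simp add: scalar_prod_def atLeast0LessThan)
  also have "\<dots> = 0"
    using assms by (subst laplacian_mult_vec) auto
  finally show ?thesis .
qed

lemma laplacian_eigenvalue_nonneg:
  assumes G: "simple_graph n E" and x: "eigenvalue (laplacian n E) x"
  shows "0 \<le> x"
proof -
  obtain v where v: "v \<in> carrier_vec n" "v \<noteq> 0\<^sub>v n" "laplacian n E *\<^sub>v v = x \<cdot>\<^sub>v v"
    using x unfolding eigenvalue_def eigenvector_def by auto
  \<comment> \<open>At a coordinate of maximal modulus each summand of \<open>x v\<^sub>i\<^sup>2 = v\<^sub>i (L v)\<^sub>i\<close> is nonnegative.\<close>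
  obtain i where i: "i < n" and max: "\<And>j. j < n \<Longrightarrow> \<bar>v $ j\<bar> \<le> \<bar>v $ i\<bar>"
  proof -
    have "n \<noteq> 0"
      using v(1,2) by (auto intro!: eq_vecI)
    then have "Max ((\<lambda>j. \<bar>v $ j\<bar>) ` {..<n}) \<in> (\<lambda>j. \<bar>v $ j\<bar>) ` {..<n}"
      by (intro Max_in) auto
    then obtain i where "i < n" "\<bar>v $ i\<bar> = Max ((\<lambda>j. \<bar>v $ j\<bar>) ` {..<n})"
      by auto
    then show thesis
      using that by simp
  qed
  have "v $ i \<noteq> 0"
  proof
    assume "v $ i = 0"
    then have "v = 0\<^sub>v n"
      using v(1) max by (intro eq_vecI) (auto dest: abs_le_zero_iff[THEN iffD1])
    with v(2) show False ..
  qed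
  have "x * (v $ i)\<^sup>2 = v $ i * (laplacian n E *\<^sub>v v) $ i"
    using v i by (simp add: power2_eq_square)
  also have "\<dots> = (\<Sum>j | j < n \<and> E i j. (v $ i)\<^sup>2 - v $ i * v $ j)"
    by (simp add: laplacian_mult_vec[OF G v(1) i] sum_distrib_left right_diff_distrib power2_eq_square)
  also have "\<dots> \<ge> 0"
  proof (intro sum_nonneg)
    fix j assume "j \<in> {j. j < n \<and> E i j}"
    have "v $ i * v $ j \<le> \<bar>v $ i\<bar> * \<bar>v $ j\<bar>"
      by (metis abs_ge_self abs_mult)
    also have "\<dots> \<le> \<bar>v $ i\<bar> * \<bar>v $ i\<bar>"
      using max \<open>j \<in> {j. j < n \<and> E i j}\<close> by (intro mult_left_mono) auto
    finally have "v $ i * v $ j \<le> \<bar>v $ i\<bar> * \<bar>v $ i\<bar>" .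
    then show "0 \<le> (v $ i)\<^sup>2 - v $ i * v $ j"
      by (simp add: power2_eq_square)
  qed
  finally show ?thesis
    using \<open>v $ i \<noteq> 0\<close> by (simp add: zero_le_mult_iff)
qed

lemma char_poly_laplacian:
  assumes "simple_graph n E" and "0 < n"
  shows "char_poly (laplacian n E) = [:0, 1:] * char_poly (deflate_mat (laplacian n E))"
  using char_poly_const_row_sums[OF laplacian_carrier \<open>0 < n\<close> laplacian_row_sum[OF assms(1)]]
  by simp

lemma deflated_laplacian_spectrum_nonneg:
  assumes G: "simple_graph n E" and "0 < n" and x: "x \<in> spectrum (deflate_mat (laplacian n E))"
  shows "0 \<le> x"
proof -
  have K: "deflate_mat (laplacian n E) \<in> carrier_mat (n - 1) (n - 1)"
    by (rule deflate_mat_carrier[OF laplacian_carrier])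
  have "poly (char_poly (laplacian n E)) x = 0"
    using x spectrum_root_char_poly[OF K] char_poly_laplacian[OF G \<open>0 < n\<close>] by simp
  then have "eigenvalue (laplacian n E) x"
    by (simp add: eigenvalue_root_char_poly[OF laplacian_carrier])
  then show ?thesis
    by (rule laplacian_eigenvalue_nonneg[OF G])
qed

lemma deflated_laplacian_spectrum_nonempty:
  assumes G: "simple_graph n E" and "2 \<le> n"
  shows "spectrum (deflate_mat (laplacian n E)) \<noteq> {}"
proof -
  have K: "deflate_mat (laplacian n E) \<in> carrier_mat (n - 1) (n - 1)"
    by (rule deflate_mat_carrier[OF laplacian_carrier])
  have "degree (char_poly (deflate_mat (laplacian n E))) > 0"
    using degree_monic_char_poly[OF K] \<open>2 \<le> n\<close> by simp
  then obtain x where "poly (char_poly (deflate_mat (laplacian n E))) x = 0"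
    using \<open>2 \<le> n\<close> real_symmetric_char_poly_factor_has_root[OF laplacian_carrier
        transpose_laplacian[OF G] char_poly_laplacian[OF G]] by auto
  then show ?thesis
    by (auto simp: spectrum_root_char_poly[OF K])
qed

lemma second_smallest_eig_laplacian:
  assumes G: "simple_graph n E" and "2 \<le> n"
  shows "second_smallest_eig (laplacian n E) = Min (spectrum (deflate_mat (laplacian n E)))"
proof -
  have K: "deflate_mat (laplacian n E) \<in> carrier_mat (n - 1) (n - 1)"
    by (rule deflate_mat_carrier[OF laplacian_carrier])
  have "char_poly (deflate_mat (laplacian n E)) \<noteq> 0"
    using degree_monic_char_poly[OF K] by auto
  then show ?thesis
    using assms char_poly_laplacian[OF G] deflated_laplacian_spectrum_nonempty[OF assms]
      deflated_laplacian_spectrum_nonneg[OF G]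
    by (subst second_smallest_eig_eq_Min[where a = 0]) (auto simp: spectrum_root_char_poly[OF K])
qed

lemma second_smallest_eig_laplacian_nonneg:
  assumes G: "simple_graph n E" and "2 \<le> n"
  shows "0 \<le> second_smallest_eig (laplacian n E)"
proof -
  have K: "deflate_mat (laplacian n E) \<in> carrier_mat (n - 1) (n - 1)"
    by (rule deflate_mat_carrier[OF laplacian_carrier])
  then have "Min (spectrum (deflate_mat (laplacian n E))) \<in> spectrum (deflate_mat (laplacian n E))"
    using card_finite_spectrum(1)[OF K] deflated_laplacian_spectrum_nonempty[OF assms] by simp
  then show ?thesis
    using deflated_laplacian_spectrum_nonneg[OF G] second_smallest_eig_laplacian[OF assms] \<open>2 \<le> n\<close>
    by simp
qed

lemma char_poly_coupled_Q:
  assumes G: "simple_graph n E" and "0 < n"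
  defines "K \<equiv> deflate_mat (laplacian n E)"
  shows "char_poly (coupled_Q n E p) = [:0, 1:] * (char_poly (K + (p * real n) \<cdot>\<^sub>m 1\<^sub>m (n - 1))
    * ([:-(2 * (real n - 1) * p), 1:] * char_poly (K + (p * (real n - 2)) \<cdot>\<^sub>m 1\<^sub>m (n - 1))))"
proof -
  define L J where "L = laplacian n E" and "J = all_ones n"
  define D B where "D = L + (p * (real n - 1)) \<cdot>\<^sub>m 1\<^sub>m n" and "B = - (p \<cdot>\<^sub>m (J - 1\<^sub>m n))"
  have L: "L \<in> carrier_mat n n" and J: "J \<in> carrier_mat n n"
    by (simp_all add: L_def J_def laplacian_carrier all_ones_def)
  have rows: "\<And>i. i < n \<Longrightarrow> (\<Sum>j<n. L $$ (i, j)) = 0"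
    using laplacian_row_sum[OF G] by (simp add: L_def)
  have shift: "\<And>a c. char_poly (L + a \<cdot>\<^sub>m 1\<^sub>m n + c \<cdot>\<^sub>m J)
      = [:-(a + c * real n), 1:] * char_poly (K + a \<cdot>\<^sub>m 1\<^sub>m (n - 1))"
    using char_poly_zero_row_sums_shift[OF L \<open>0 < n\<close> rows] by (simp add: J_def K_def L_def)
  have D: "D \<in> carrier_mat n n" and B: "B \<in> carrier_mat n n"
    using L J by (auto simp: D_def B_def)
  have "D + B = L + (p * real n) \<cdot>\<^sub>m 1\<^sub>m n + (- p) \<cdot>\<^sub>m J"
    using L J by (intro eq_matI) (auto simp: D_def B_def algebra_simps)
  moreover have "D - B = L + (p * (real n - 2)) \<cdot>\<^sub>m 1\<^sub>m n + p \<cdot>\<^sub>m J"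
    using L J by (intro eq_matI) (auto simp: D_def B_def algebra_simps)
  moreover have "coupled_Q n E p = four_block_mat D B B D"
    by (simp add: coupled_Q_def D_def B_def L_def J_def Let_def)
  ultimately have "char_poly (coupled_Q n E p)
      = char_poly (L + (p * real n) \<cdot>\<^sub>m 1\<^sub>m n + (- p) \<cdot>\<^sub>m J)
      * char_poly (L + (p * (real n - 2)) \<cdot>\<^sub>m 1\<^sub>m n + p \<cdot>\<^sub>m J)"
    using char_poly_four_block_mat_symmetric[OF D B] by simp
  also have "\<dots> = ([:0, 1:] * char_poly (K + (p * real n) \<cdot>\<^sub>m 1\<^sub>m (n - 1)))
      * ([:-(2 * (real n - 1) * p), 1:] * char_poly (K + (p * (real n - 2)) \<cdot>\<^sub>m 1\<^sub>m (n - 1)))"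
    unfolding shift by (simp add: algebra_simps)
  finally show ?thesis
    by (simp only: mult.assoc)
qed

lemma second_smallest_eig_coupled_Q:
  assumes G: "simple_graph n E" and "2 \<le> n" and "0 \<le> p"
  shows "second_smallest_eig (coupled_Q n E p)
    = min (2 * (real n - 1) * p) (second_smallest_eig (laplacian n E) + (real n - 2) * p)"
proof -
  define K where "K = deflate_mat (laplacian n E)"
  define S where "S = spectrum K"
  define c where "c = 2 * (real n - 1) * p"
  define g where "g = char_poly (K + (p * real n) \<cdot>\<^sub>m 1\<^sub>m (n - 1))
    * ([:-c, 1:] * char_poly (K + (p * (real n - 2)) \<cdot>\<^sub>m 1\<^sub>m (n - 1)))"
  have K: "K \<in> carrier_mat (n - 1) (n - 1)"
    unfolding K_def by (rule deflate_mat_carrier[OF laplacian_carrier])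
  have S: "finite S" "S \<noteq> {}" "\<And>x. x \<in> S \<Longrightarrow> 0 \<le> x"
    using card_finite_spectrum(1)[OF K] deflated_laplacian_spectrum_nonempty[OF G \<open>2 \<le> n\<close>]
      deflated_laplacian_spectrum_nonneg[OF G] \<open>2 \<le> n\<close> by (auto simp: S_def K_def)
  have "char_poly (K + a \<cdot>\<^sub>m 1\<^sub>m (n - 1)) \<noteq> 0" for a
    using degree_monic_char_poly[of "K + a \<cdot>\<^sub>m 1\<^sub>m (n - 1)" "n - 1"] K by auto
  then have "g \<noteq> 0"
    by (simp add: g_def del: mult_pCons_left)
  have roots: "{x. poly g x = 0} = (+) (p * real n) ` S \<union> {c} \<union> (+) (p * (real n - 2)) ` S"
    unfolding g_def poly_mult mult_eq_0_iff root_char_poly_add_smult_one[OF K] S_def by auto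
  have "Min {x. poly g x = 0} = min c (p * (real n - 2) + Min S)"
    unfolding roots using S \<open>0 \<le> p\<close> by (intro Min_Un_translates) (auto intro: mult_left_mono)
  moreover have "second_smallest_eig (coupled_Q n E p) = Min {x. poly g x = 0}"
  proof (rule second_smallest_eig_eq_Min[of _ 0, unfolded minus_zero])
    show "char_poly (coupled_Q n E p) = [:0, 1:] * g"
      unfolding g_def K_def c_def using G \<open>2 \<le> n\<close> by (intro char_poly_coupled_Q) auto
    show "\<exists>x. poly g x = 0"
      using roots by auto
    show "0 \<le> x" if "poly g x = 0" for x
    proof -
      have "x \<in> (+) (p * real n) ` S \<union> {c} \<union> (+) (p * (real n - 2)) ` S"
        using that roots by blast
      then show ?thesis
        using S(3) \<open>2 \<le> n\<close> \<open>0 \<le> p\<close> by (auto simp: c_def)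
    qed
  qed fact
  ultimately show ?thesis
    using second_smallest_eig_laplacian[OF G \<open>2 \<le> n\<close>] by (simp add: S_def K_def c_def ac_simps)
qed

theorem mainTheorem5:
  fixes n :: nat and E :: "nat \<Rightarrow> nat \<Rightarrow> bool"
  assumes "n \<ge> 2" and "simple_graph n E"
  shows "p_star n E = second_smallest_eig (laplacian n E) / real n"
proof -
  define lam where "lam = second_smallest_eig (laplacian n E)"
  have "0 \<le> lam"
    unfolding lam_def using assms by (intro second_smallest_eig_laplacian_nonneg)
  have "second_smallest_eig (coupled_Q n E p) = 2 * (real n - 1) * p \<longleftrightarrow> p \<le> lam / real n"
    if "0 < p" for p
    using second_smallest_eig_coupled_Q[OF assms(2,1), of p] that assms(1)
    by (auto simp: lam_def min_def field_simps)
  then have "{0} \<union> {p. 0 < p \<and> second_smallest_eig (coupled_Q n E p) = 2 * (real n - 1) * p}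
      = {0..lam / real n}"
    using \<open>0 \<le> lam\<close> by auto
  then show ?thesis
    using \<open>0 \<le> lam\<close> by (simp add: p_star_def lam_def)
qed

end
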